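(* Let $F$ and $V$ be finite-dimensional real vector spaces in duality via a nondegenerate pairing $\langle\cdot,\cdot\rangle$, with $V$ carrying its usual topology, and let $Q$ be a positive semi-definite quadratic form on $F$. Let $\mathcal U_0$ be the family of all open subsets of half-spaces $\{\nu\in V:\langle f,\nu\rangle>a\}$ with $a>0$ and $Q(f)=0$. Let $\mathcal U_1$ be the family of all sets $$\{\nu\in V:\langle f_0,\nu\rangle>a_0,\ \langle f_1,\nu\rangle<a_1,\ \dots,\ \langle f_n,\nu\rangle<a_n\}$$ with $n\ge0$, $f_0,\dots,f_n\in F$, $a_0,\dots,a_n\in\mathbb R$, such that either $0<a_0/\sqrt{Q(f_0)}<a_i/\sqrt{Q(f_i)}$ for all $i=1,\dots,n$, or $a_0<0<a_i$ for all $i=1,\dots,n$. Then $\mathcal U_0\cup\mathcal U_1$ is a basis of the topology of $V$.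
   Context: Division convention: $0/0=0$, $a/0=+\infty$ for $a>0$ and $a/0=-\infty$ for $a<0$. *)

theory Defs
  imports "HOL-Analysis.Analysis"
begin

text \<open>Division with the paper's convention: 0/0 = 0, a/0 = +inf for a > 0, a/0 = -inf for a < 0.\<close>
definition ediv :: "real \<Rightarrow> real \<Rightarrow> ereal" where
  "ediv a b = (if b = 0 then (if a > 0 then \<infinity> else if a < 0 then -\<infinity> else 0)
               else ereal (a / b))"

definition nondegenerate_pairing :: "('f::real_vector \<Rightarrow> 'v::real_vector \<Rightarrow> real) \<Rightarrow> bool" where
  "nondegenerate_pairing p \<longleftrightarrow> bilinear p \<and>
     (\<forall>f. (\<forall>v. p f v = 0) \<longrightarrow> f = 0) \<and> (\<forall>v. (\<forall>f. p f v = 0) \<longrightarrow> v = 0)"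

definition psd_quadratic_form :: "('f::real_vector \<Rightarrow> real) \<Rightarrow> bool" where
  "psd_quadratic_form Q \<longleftrightarrow> (\<exists>B. bilinear B \<and> (\<forall>x. Q x = B x x)) \<and> (\<forall>x. Q x \<ge> 0)"

definition U0 :: "('f::real_vector \<Rightarrow> 'v::topological_space \<Rightarrow> real) \<Rightarrow> ('f \<Rightarrow> real) \<Rightarrow> 'v set set" where
  "U0 p Q = {U. open U \<and> (\<exists>f a. a > 0 \<and> Q f = 0 \<and> U \<subseteq> {v. p f v > a})}"

definition U1 :: "('f::real_vector \<Rightarrow> 'v \<Rightarrow> real) \<Rightarrow> ('f \<Rightarrow> real) \<Rightarrow> 'v set set" where
  "U1 p Q = {{v. p (f 0) v > a 0 \<and> (\<forall>i\<in>{1..n}. p (f i) v < a i)} | (n::nat) (f::nat \<Rightarrow> 'f) (a::nat \<Rightarrow> real).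
      (0 < ediv (a 0) (sqrt (Q (f 0))) \<and>
         (\<forall>i\<in>{1..n}. ediv (a 0) (sqrt (Q (f 0))) < ediv (a i) (sqrt (Q (f i)))))
    \<or> (a 0 < 0 \<and> (\<forall>i\<in>{1..n}. 0 < a i))}"

end

theory Submission
  imports Defs
begin

(*
  The sets of U0 and U1 are open because the maps v \<mapsto> p f v are continuous
  linear functionals.  For the basis property, let W be open and x \<in> W.  Nondegeneracy makes
  v \<mapsto> (p b v)_b a linear embedding, so W contains a "box" around x cut out by finitely
  many strict inequalities p g v < p g x + \<delta>, g ranging over the basis vectors and their
  negatives.  Three cases:
  (1) x = 0: the box itself belongs to U1 (second alternative, a_0 < 0 < a_i).
  (2) p f x \<noteq> 0 for some f with Q f = 0: a piece of W inside a half-space lies in U0.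
  (3) otherwise the functional p(\<cdot>, x) vanishes on the null cone of Q, hence it is the
      polar form B(f_0, \<cdot>) of Q for some f_0 with Q f_0 > 0.  For small s > 0 the set
        {v. p f_0 v > Q f_0 - s d,  p (f_0 + s g) v < Q f_0 + s (p g x + d)}
      lies in the box and belongs to U1 (first alternative); the ratio condition of U1
      holds for small s since the relevant difference of ratios vanishes at s = 0 and has
      positive derivative 2d/\<surd>(Q f_0) there.
*)

definition polar_form :: "('f::real_vector \<Rightarrow> real) \<Rightarrow> 'f \<Rightarrow> 'f \<Rightarrow> real" where
  "polar_form Q f g = (Q (f + g) - Q f - Q g) / 2"

lemma polar_form_of_bilinear:
  assumes "bilinear B" and "\<And>x. Q x = B x x"
  shows "polar_form Q f g = (B f g + B g f) / 2"
  using assms by (simp add: polar_form_def bilinear_ladd bilinear_radd)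

lemma psd_quadratic_form_polar:
  assumes "psd_quadratic_form Q"
  shows "bilinear (polar_form Q)"
    and "polar_form Q f f = Q f"
    and "Q (f + t *\<^sub>R g) = Q f + 2 * t * polar_form Q f g + t\<^sup>2 * Q g"
    and "Q (- f) = Q f"
proof -
  obtain B where B: "bilinear B" "\<And>x. Q x = B x x"
    using assms unfolding psd_quadratic_form_def by blast
  note polar = polar_form_of_bilinear[OF B]
  show "bilinear (polar_form Q)"
    unfolding bilinear_def polar
    by (auto intro!: linearI simp: bilinear_ladd[OF B(1)] bilinear_radd[OF B(1)]
        bilinear_lmul[OF B(1)] bilinear_rmul[OF B(1)] field_simps)
  show "polar_form Q f f = Q f"
    by (simp add: polar B(2))
  show "Q (f + t *\<^sub>R g) = Q f + 2 * t * polar_form Q f g + t\<^sup>2 * Q g"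
    unfolding B(2) polar
    by (simp add: bilinear_ladd[OF B(1)] bilinear_radd[OF B(1)] bilinear_lmul[OF B(1)]
        bilinear_rmul[OF B(1)] algebra_simps power2_eq_square)
  show "Q (- f) = Q f"
    by (simp add: B(2) bilinear_lneg[OF B(1)] bilinear_rneg[OF B(1)])
qed

lemma nonneg_quadratic_linear_coeff:
  fixes b c :: real
  assumes nonneg: "\<And>t. 0 \<le> 2 * t * b + t\<^sup>2 * c" and "c \<ge> 0"
  shows "b = 0"
proof -
  define u where "u = c + 1"
  have u: "u > 0" using assms(2) by (simp add: u_def)
  define t where "t = - b / u"
  have tu: "t * u = - b" using u by (simp add: t_def)
  have "0 \<le> u * u * (2 * t * b + t\<^sup>2 * c)" using nonneg[of t] u by simp
  also have "u * u * (2 * t * b + t\<^sup>2 * c) = 2 * (t * u) * b * u + (t * u) * (t * u) * c"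
    by (simp add: algebra_simps power2_eq_square)
  also have "\<dots> = b * b * c - 2 * b * b * u" unfolding tu by (simp add: algebra_simps)
  finally have "b * b * (c + 2) \<le> 0" by (simp add: u_def algebra_simps)
  then have "b * b \<le> 0" using assms(2) by (simp add: mult_le_0_iff)
  then show ?thesis by (auto simp: mult_le_0_iff)
qed

text \<open>Null vectors of a psd form lie in the radical of its polar form (Cauchy--Schwarz).\<close>
lemma psd_null_vector_isotropic:
  assumes psd: "psd_quadratic_form Q" and "Q f = 0"
  shows "polar_form Q f g = 0"
proof (rule nonneg_quadratic_linear_coeff)
  have nonneg: "\<And>x. Q x \<ge> 0" using psd unfolding psd_quadratic_form_def by blast
  then show "Q g \<ge> 0" .
  show "0 \<le> 2 * t * polar_form Q f g + t\<^sup>2 * Q g" for t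
    using nonneg[of "f + t *\<^sub>R g"] \<open>Q f = 0\<close> unfolding psd_quadratic_form_polar(3)[OF psd]
    by simp
qed

lemma linear_functional_inner:
  fixes \<phi> :: "'a::euclidean_space \<Rightarrow> real"
  assumes "linear \<phi>"
  shows "\<phi> g = g \<bullet> (\<Sum>b\<in>Basis. \<phi> b *\<^sub>R b)"
proof -
  have "\<phi> g = \<phi> (\<Sum>b\<in>Basis. (g \<bullet> b) *\<^sub>R b)" by (simp add: euclidean_representation)
  also have "\<dots> = (\<Sum>b\<in>Basis. (g \<bullet> b) * \<phi> b)"
    by (simp add: linear_sum[OF assms] linear_scale[OF assms])
  also have "\<dots> = g \<bullet> (\<Sum>b\<in>Basis. \<phi> b *\<^sub>R b)"
    by (simp add: inner_sum_right mult.commute)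
  finally show ?thesis .
qed

text \<open>A linear functional vanishing on the null cone of a psd form Q is of the form
  B(f_0, \<cdot>) for the polar form B of Q: write its Riesz vector as y + z with y in the
  range of f \<mapsto> B(f, \<cdot>) and z orthogonal to it; then Q z = 0, which forces z = 0.\<close>
lemma functional_vanishing_on_null_cone:
  fixes \<phi> :: "'f::euclidean_space \<Rightarrow> real"
  assumes "linear \<phi>" and psd: "psd_quadratic_form Q" and null: "\<And>f. Q f = 0 \<Longrightarrow> \<phi> f = 0"
  shows "\<exists>f0. \<forall>g. \<phi> g = polar_form Q f0 g"
proof -
  have bil: "bilinear (polar_form Q)" by (rule psd_quadratic_form_polar(1)[OF psd])
  define w where "w = (\<Sum>b\<in>Basis. \<phi> b *\<^sub>R b)"
  define \<Psi> where "\<Psi> f = (\<Sum>b\<in>Basis. polar_form Q f b *\<^sub>R b)" for f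
  have \<phi>_w: "\<phi> g = g \<bullet> w" for g
    unfolding w_def by (rule linear_functional_inner[OF assms(1)])
  have polar_\<Psi>: "polar_form Q f g = g \<bullet> \<Psi> f" for f g
    unfolding \<Psi>_def using bil by (intro linear_functional_inner) (simp add: bilinear_def)
  have "linear \<Psi>" unfolding \<Psi>_def
    by (rule linearI) (simp_all add: bilinear_ladd[OF bil] bilinear_lmul[OF bil]
        scaleR_add_left sum.distrib scaleR_sum_right)
  then have "span (range \<Psi>) = range \<Psi>"
    using linear_subspace_image subspace_UNIV span_eq_iff by blast
  moreover obtain y z where y: "y \<in> span (range \<Psi>)"
    and z: "\<And>u. u \<in> span (range \<Psi>) \<Longrightarrow> orthogonal z u" and w: "w = y + z"
    using orthogonal_subspace_decomp_exists[of "range \<Psi>" w] by blast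
  ultimately obtain f0 where f0: "y = \<Psi> f0" by (metis rangeE)
  have "Q z = 0"
    using z[of "\<Psi> z"] polar_\<Psi>[of z z] psd_quadratic_form_polar(2)[OF psd, of z]
    by (simp add: orthogonal_def inner_commute span_base)
  then have "z \<bullet> y + z \<bullet> z = 0" using null \<phi>_w[of z] w by (simp add: inner_add_right)
  moreover have "z \<bullet> y = 0" using z[OF y] by (simp add: orthogonal_def)
  ultimately have "w = \<Psi> f0" using w f0 by simp
  then have "\<forall>g. \<phi> g = polar_form Q f0 g" using \<phi>_w polar_\<Psi> by simp
  then show ?thesis by blast
qed

definition signed_basis :: "'a::euclidean_space set" where
  "signed_basis = Basis \<union> uminus ` Basis"

lemma finite_signed_basis: "finite signed_basis"
  by (simp add: signed_basis_def)

lemma nondegenerate_pairing_box: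
  fixes p :: "'f::euclidean_space \<Rightarrow> 'v::euclidean_space \<Rightarrow> real"
  assumes "nondegenerate_pairing p" and "open W" and "x \<in> W"
  shows "\<exists>\<delta>>0. {v. \<forall>g\<in>signed_basis. p g v < p g x + \<delta>} \<subseteq> W"
proof -
  have bil: "bilinear p" and nondeg: "\<And>v. (\<forall>f. p f v = 0) \<Longrightarrow> v = 0"
    using assms(1) unfolding nondegenerate_pairing_def by auto
  obtain e where e: "e > 0" "ball x e \<subseteq> W" using assms open_contains_ball by blast
  define L where "L v = (\<Sum>b\<in>(Basis::'f set). p b v *\<^sub>R b)" for v
  have "linear L" unfolding L_def
    by (rule linearI) (simp_all add: bilinear_radd[OF bil] bilinear_rmul[OF bil]
        scaleR_add_left sum.distrib scaleR_sum_right)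
  moreover have "inj L"
    unfolding linear_injective_0[OF \<open>linear L\<close>]
  proof (intro allI impI)
    fix v assume "L v = 0"
    then have "p g v = 0" for g
      using linear_functional_inner[of "\<lambda>f. p f v" g] bil unfolding L_def bilinear_def by simp
    then show "v = 0" using nondeg by blast
  qed
  ultimately obtain C where C: "C > 0" "\<And>v. C * norm v \<le> norm (L v)"
    using linear_inj_bounded_below_pos by blast
  define \<delta> where "\<delta> = e * C / real DIM('f)"
  have "v \<in> W" if v: "\<forall>g\<in>signed_basis. p g v < p g x + \<delta>" for v
  proof -
    have box: "\<bar>p b (v - x)\<bar> < \<delta>" if "b \<in> Basis" for b
    proof -
      have "b \<in> signed_basis" "- b \<in> signed_basis" using that by (auto simp: signed_basis_def)
      then show ?thesis using v
        by (auto simp: abs_less_iff bilinear_lneg[OF bil] bilinear_rsub[OF bil])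
    qed
    have "C * norm (v - x) \<le> norm (L (v - x))" by (rule C(2))
    also have "\<dots> \<le> (\<Sum>b\<in>Basis. \<bar>p b (v - x)\<bar>)"
      unfolding L_def using norm_sum by (fastforce intro: order_trans)
    also have "\<dots> < (\<Sum>b\<in>(Basis::'f set). \<delta>)"
      by (rule sum_strict_mono) (use box in auto)
    also have "\<dots> = C * e" by (simp add: \<delta>_def)
    finally have "dist x v < e" using C(1) by (simp add: dist_norm norm_minus_commute)
    then show ?thesis using e by auto
  qed
  moreover have "\<delta> > 0" using e C by (simp add: \<delta>_def)
  ultimately show ?thesis by blast
qed

lemma U1_memberI:
  fixes p :: "'f::real_vector \<Rightarrow> 'v \<Rightarrow> real"
  assumes "finite G"
    and "(0 < ediv a0 (sqrt (Q f0)) \<and>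
          (\<forall>g\<in>G. ediv a0 (sqrt (Q f0)) < ediv (c g) (sqrt (Q (h g)))))
         \<or> (a0 < 0 \<and> (\<forall>g\<in>G. 0 < c g))"
  shows "{v. a0 < p f0 v \<and> (\<forall>g\<in>G. p (h g) v < c g)} \<in> U1 p Q"
proof -
  obtain L where L: "set L = G" using finite_list[OF assms(1)] by blast
  define n where "n = length L"
  define f where "f i = (if i = 0 then f0 else h (L ! (i - 1)))" for i
  define a where "a i = (if i = 0 then a0 else c (L ! (i - 1)))" for i
  have enum: "(\<lambda>i. L ! (i - 1)) ` {1..n} = G"
    unfolding n_def L[symmetric] set_conv_nth by (force simp: image_iff)
  have ball_G: "(\<forall>i\<in>{1..n}. P (L ! (i - 1))) \<longleftrightarrow> (\<forall>g\<in>G. P g)" for P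
    by (simp flip: enum)
  have "{v. a0 < p f0 v \<and> (\<forall>g\<in>G. p (h g) v < c g)}
      = {v. p (f 0) v > a 0 \<and> (\<forall>i\<in>{1..n}. p (f i) v < a i)}"
    using ball_G[of "\<lambda>g. p (h g) _ < c g"] by (auto simp: f_def a_def)
  moreover have "(0 < ediv (a 0) (sqrt (Q (f 0))) \<and>
         (\<forall>i\<in>{1..n}. ediv (a 0) (sqrt (Q (f 0))) < ediv (a i) (sqrt (Q (f i)))))
    \<or> (a 0 < 0 \<and> (\<forall>i\<in>{1..n}. 0 < a i))"
    using assms(2) ball_G[of "\<lambda>g. ediv a0 (sqrt (Q f0)) < ediv (c g) (sqrt (Q (h g)))"]
      ball_G[of "\<lambda>g. 0 < c g"] by (auto simp: f_def a_def)
  ultimately show ?thesis unfolding U1_def by blast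
qed

lemma U0_U1_open:
  fixes p :: "'f::real_vector \<Rightarrow> 'v::euclidean_space \<Rightarrow> real"
  assumes "bilinear p" and "U \<in> U0 p Q \<union> U1 p Q"
  shows "open U"
proof -
  have cont: "continuous_on UNIV (\<lambda>v. p f v)" for f
    using assms(1) unfolding bilinear_def by (simp add: linear_continuous_on linear_conv_bounded_linear)
  show ?thesis
  proof (cases "U \<in> U0 p Q")
    case True then show ?thesis by (simp add: U0_def)
  next
    case False
    then obtain n f a where U: "U = {v. p (f 0) v > a 0 \<and> (\<forall>i\<in>{1..n::nat}. p (f i) v < a i)}"
      using assms(2) unfolding U1_def by blast
    have "U = {v. a 0 < p (f 0) v} \<inter> (\<Inter>i\<in>{1..n}. {v. p (f i) v < a i})" unfolding U by auto
    moreover have "open {v. a 0 < p (f 0) v}"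
      by (rule open_Collect_less) (auto intro: cont continuous_on_const)
    moreover have "open (\<Inter>i\<in>{1..n}. {v. p (f i) v < a i})"
      by (rule open_INT) (auto intro!: open_Collect_less cont continuous_on_const)
    ultimately show ?thesis by auto
  qed
qed

lemma U1_neighbourhood_of_origin:
  fixes p :: "'f::real_vector \<Rightarrow> 'v::real_vector \<Rightarrow> real"
  assumes "bilinear p" and "finite G" and "\<delta> > 0"
  shows "\<exists>S\<in>U1 p Q. 0 \<in> S \<and> S \<subseteq> {v. \<forall>g\<in>G. p g v < p g 0 + \<delta>}"
proof -
  have p0: "p 0 v = 0" "p g 0 = 0" for g v
    by (rule bilinear_lzero[OF assms(1)], rule bilinear_rzero[OF assms(1)])
  define S where "S = {v. - 1 < p 0 v \<and> (\<forall>g\<in>G. p g v < \<delta>)}"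
  have "S \<in> U1 p Q"
    unfolding S_def using assms(2,3)
    by (intro U1_memberI[where h = "\<lambda>g. g" and c = "\<lambda>_. \<delta>"] disjI2) simp_all
  moreover have "0 \<in> S" "S \<subseteq> {v. \<forall>g\<in>G. p g v < p g 0 + \<delta>}"
    using assms(3) by (auto simp: S_def p0)
  ultimately show ?thesis by blast
qed

text \<open>Case of a null direction f with p f x \<noteq> 0: after possibly replacing f by -f,
  the neighbourhood is cut by an open half-space of U0.\<close>
lemma U0_neighbourhood_of_null_direction:
  fixes p :: "'f::real_vector \<Rightarrow> 'v::euclidean_space \<Rightarrow> real"
  assumes "bilinear p" and "psd_quadratic_form Q" and "Q f = 0" and "p f x \<noteq> 0"
    and "open W" and "x \<in> W"
  shows "\<exists>S\<in>U0 p Q. x \<in> S \<and> S \<subseteq> W"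
proof -
  obtain f' where f': "Q f' = 0" "p f' x > 0"
    using assms(3,4) psd_quadratic_form_polar(4)[OF assms(2), of f] bilinear_lneg[OF assms(1)]
    by (metis neg_0_less_iff_less linorder_neqE_linordered_idom)
  define S where "S = W \<inter> {v. p f' x / 2 < p f' v}"
  have "continuous_on UNIV (\<lambda>v. p f' v)"
    using assms(1) unfolding bilinear_def by (simp add: linear_continuous_on linear_conv_bounded_linear)
  then have "open S" unfolding S_def
    by (intro open_Int assms(5) open_Collect_less continuous_on_const)
  then have "S \<in> U0 p Q" unfolding U0_def S_def using f'
    by (intro CollectI conjI exI[of _ f'] exI[of _ "p f' x / 2"]) auto
  moreover have "x \<in> S" "S \<subseteq> W" using assms(6) f' by (auto simp: S_def)
  ultimately show ?thesis by blast
qed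

text \<open>The difference of the two ratios vanishes at s = 0 with derivative 2d/\<surd>q > 0.\<close>
lemma perturbed_ratio_eventually:
  fixes q c d e :: real
  assumes "q > 0" and "d > 0"
  shows "\<forall>\<^sub>F s in at_right 0. 0 < q - s * d \<and> 0 < q + 2 * s * c + s\<^sup>2 * e \<and>
           (q - s * d) / sqrt q < (q + s * (c + d)) / sqrt (q + 2 * s * c + s\<^sup>2 * e)"
proof -
  define h where "h s = (q + s * (c + d)) / sqrt (q + 2 * s * c + s\<^sup>2 * e) - (q - s * d) / sqrt q"
    for s
  have deriv: "(h has_real_derivative 2 * d / sqrt q) (at 0)"
  proof -
    \<comment> \<open>the derivative rules yield the left-hand side; it equals 2d/\<surd>q\<close>
    have "((c + d) * sqrt q - q * (inverse (sqrt q) * c)) / q + d * sqrt q / q = 2 * d / sqrt q"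
      using assms(1) by (simp add: field_simps real_sqrt_mult[symmetric])
    then show ?thesis unfolding h_def using assms(1)
      by - (rule derivative_eq_intros refl | simp)+
  qed
  have "2 * d / sqrt q > 0" using assms by simp
  from DERIV_pos_inc_right[OF deriv this]
  obtain r where "r > 0" and incr: "\<And>t. 0 < t \<Longrightarrow> t < r \<Longrightarrow> h 0 < h t"
    by auto
  have ratio: "\<forall>\<^sub>F s in at_right 0. 0 < h s"
    using eventually_at_right_real[OF \<open>r > 0\<close>]
    by eventually_elim (use incr assms(1) in \<open>auto simp: h_def\<close>)
  have "((\<lambda>s. q - s * d) \<longlongrightarrow> q) (at_right 0)"
    and "((\<lambda>s. q + 2 * s * c + s\<^sup>2 * e) \<longlongrightarrow> q) (at_right 0)"
    by (auto intro!: tendsto_eq_intros)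
  then have "\<forall>\<^sub>F s in at_right 0. 0 < q - s * d" "\<forall>\<^sub>F s in at_right 0. 0 < q + 2 * s * c + s\<^sup>2 * e"
    using order_tendstoD(1) assms(1) by blast+
  with ratio show ?thesis
    by eventually_elim (auto simp: h_def)
qed

lemma U1_neighbourhood_of_regular_point:
  fixes p :: "'f::real_vector \<Rightarrow> 'v::real_vector \<Rightarrow> real"
  assumes bil: "bilinear p" and psd: "psd_quadratic_form Q" and "finite G" and "d > 0"
    and repr: "\<And>g. p g x = polar_form Q f0 g" and "0 < Q f0"
  shows "\<exists>S\<in>U1 p Q. x \<in> S \<and> S \<subseteq> {v. \<forall>g\<in>G. p g v < p g x + 2 * d}"
proof -
  define q where "q = Q f0"
  have p_shift: "p (f0 + s *\<^sub>R g) v = p f0 v + s * p g v" for s g v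
    by (simp add: bilinear_ladd[OF bil] bilinear_lmul[OF bil])
  have Q_shift: "Q (f0 + s *\<^sub>R g) = q + 2 * s * p g x + s\<^sup>2 * Q g" for s g
    using psd_quadratic_form_polar(3)[OF psd] repr by (simp add: q_def)
  have px: "p f0 x = q" using repr psd_quadratic_form_polar(2)[OF psd] by (simp add: q_def)
  have "q > 0" using \<open>0 < Q f0\<close> by (simp add: q_def)
  have "\<forall>\<^sub>F s in at_right 0. 0 < s \<and> 0 < q - s * d \<and> (\<forall>g\<in>G. 0 < Q (f0 + s *\<^sub>R g) \<and>
          (q - s * d) / sqrt q < (q + s * (p g x + d)) / sqrt (Q (f0 + s *\<^sub>R g)))"
  proof -
    note ratio = perturbed_ratio_eventually[OF \<open>q > 0\<close> \<open>d > 0\<close>]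
    have "\<forall>\<^sub>F s in at_right 0. 0 < (s::real)" by (rule eventually_at_right_less)
    moreover have "\<forall>\<^sub>F s in at_right 0. 0 < q - s * d"
      using ratio[of 0 0] by eventually_elim simp
    moreover have "\<forall>\<^sub>F s in at_right 0. \<forall>g\<in>G. 0 < Q (f0 + s *\<^sub>R g) \<and>
          (q - s * d) / sqrt q < (q + s * (p g x + d)) / sqrt (Q (f0 + s *\<^sub>R g))"
      unfolding Q_shift using \<open>finite G\<close>
    proof (intro eventually_ball_finite ballI)
      show "\<forall>\<^sub>F s in at_right 0. 0 < q + 2 * s * p g x + s\<^sup>2 * Q g \<and>
          (q - s * d) / sqrt q < (q + s * (p g x + d)) / sqrt (q + 2 * s * p g x + s\<^sup>2 * Q g)" for g
        using ratio[of "p g x" "Q g"] by eventually_elim blast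
    qed
    ultimately show ?thesis by eventually_elim blast
  qed
  then obtain s where "0 < s" and "0 < q - s * d" and ratio_s: "\<And>g. g \<in> G \<Longrightarrow>
      0 < Q (f0 + s *\<^sub>R g) \<and> (q - s * d) / sqrt q < (q + s * (p g x + d)) / sqrt (Q (f0 + s *\<^sub>R g))"
    using eventually_happens'[OF trivial_limit_at_right_real] by blast
  define S where "S = {v. q - s * d < p f0 v \<and> (\<forall>g\<in>G. p (f0 + s *\<^sub>R g) v < q + s * (p g x + d))}"
  have base: "ediv (q - s * d) (sqrt (Q f0)) = ereal ((q - s * d) / sqrt q)"
    using \<open>q > 0\<close> by (simp add: ediv_def q_def)
  have "S \<in> U1 p Q" unfolding S_def
  proof (intro U1_memberI[where h = "\<lambda>g. f0 + s *\<^sub>R g"] disjI1 conjI ballI \<open>finite G\<close>)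
    show "0 < ediv (q - s * d) (sqrt (Q f0))"
      unfolding base using \<open>q > 0\<close> \<open>0 < q - s * d\<close> by simp
    show "ediv (q - s * d) (sqrt (Q f0)) < ediv (q + s * (p g x + d)) (sqrt (Q (f0 + s *\<^sub>R g)))"
      if "g \<in> G" for g
      using ratio_s[OF that] unfolding base by (simp add: ediv_def)
  qed
  moreover have "x \<in> S"
    using \<open>0 < s\<close> \<open>d > 0\<close> \<open>0 < q - s * d\<close> by (simp add: S_def p_shift px)
  moreover have "S \<subseteq> {v. \<forall>g\<in>G. p g v < p g x + 2 * d}"
  proof (intro subsetI CollectI ballI)
    fix v g assume "v \<in> S" "g \<in> G"
    then have "q - s * d < p f0 v" "p f0 v + s * p g v < q + s * (p g x + d)"
      by (auto simp: S_def p_shift)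
    then have "s * p g v < s * (p g x + 2 * d)" by (simp add: algebra_simps)
    then show "p g v < p g x + 2 * d" using \<open>0 < s\<close> by simp
  qed
  ultimately show ?thesis by blast
qed

text \<open>If p(\<cdot>, x) vanishes on the null cone of Q and x \<noteq> 0, then p(\<cdot>, x) is the polar
  form B(f_0, \<cdot>) of a vector f_0 with Q f_0 > 0 (Q f_0 = 0 would make p(\<cdot>, x) vanish).\<close>
lemma regular_point_polar_representation:
  fixes p :: "'f::euclidean_space \<Rightarrow> 'v::real_vector \<Rightarrow> real"
  assumes "nondegenerate_pairing p" and psd: "psd_quadratic_form Q"
    and "x \<noteq> 0" and null: "\<And>f. Q f = 0 \<Longrightarrow> p f x = 0"
  shows "\<exists>f0. (\<forall>g. p g x = polar_form Q f0 g) \<and> 0 < Q f0"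
proof -
  have "linear (\<lambda>g. p g x)"
    using assms(1) by (simp add: nondegenerate_pairing_def bilinear_def)
  then obtain f0 where f0: "\<And>g. p g x = polar_form Q f0 g"
    using functional_vanishing_on_null_cone[OF _ psd] null by blast
  have "Q f0 \<noteq> 0"
  proof
    assume "Q f0 = 0"
    then have "\<forall>g. p g x = 0" using f0 psd_null_vector_isotropic[OF psd] by simp
    then show False using assms(1,3) unfolding nondegenerate_pairing_def by blast
  qed
  then have "0 < Q f0" using psd unfolding psd_quadratic_form_def by (simp add: order_less_le)
  with f0 show ?thesis by blast
qed

lemma U0_U1_local_base:
  fixes p :: "'f::euclidean_space \<Rightarrow> 'v::euclidean_space \<Rightarrow> real"
  assumes pairing: "nondegenerate_pairing p" and psd: "psd_quadratic_form Q"
    and W: "open W" "x \<in> W"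
  shows "\<exists>S\<in>U0 p Q \<union> U1 p Q. x \<in> S \<and> S \<subseteq> W"
proof -
  have bil: "bilinear p" using pairing unfolding nondegenerate_pairing_def by blast
  obtain \<delta> where "\<delta> > 0" and box: "{v. \<forall>g\<in>signed_basis. p g v < p g x + \<delta>} \<subseteq> W"
    using nondegenerate_pairing_box[OF pairing W] by blast
  consider (origin) "x = 0" | (null) f where "Q f = 0" "p f x \<noteq> 0"
    | (regular) "x \<noteq> 0" "\<And>f. Q f = 0 \<Longrightarrow> p f x = 0" by blast
  then show ?thesis
  proof cases
    case origin
    obtain S where "S \<in> U1 p Q" "0 \<in> S" and "S \<subseteq> {v. \<forall>g\<in>signed_basis. p g v < p g 0 + \<delta>}"
      using U1_neighbourhood_of_origin[OF bil finite_signed_basis \<open>\<delta> > 0\<close>, where Q = Q] by blast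
    with box origin show ?thesis by blast
  next
    case null
    then show ?thesis using U0_neighbourhood_of_null_direction[OF bil psd null W] by blast
  next
    case regular
    then obtain f0 where f0: "\<And>g. p g x = polar_form Q f0 g" and "0 < Q f0"
      using regular_point_polar_representation[OF pairing psd] by blast
    have "0 < \<delta> / 2" using \<open>\<delta> > 0\<close> by simp
    then obtain S where "S \<in> U1 p Q" "x \<in> S"
      and "S \<subseteq> {v. \<forall>g\<in>signed_basis. p g v < p g x + 2 * (\<delta> / 2)}"
      using U1_neighbourhood_of_regular_point[OF bil psd finite_signed_basis _ f0 \<open>0 < Q f0\<close>]
      by blast
    with box show ?thesis by auto
  qed
qed

theorem mainTheorem9:
  fixes p :: "'f::euclidean_space \<Rightarrow> 'v::euclidean_space \<Rightarrow> real"
    and Q :: "'f \<Rightarrow> real"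
  assumes "nondegenerate_pairing p"
    and "psd_quadratic_form Q"
  shows "topological_basis (U0 p Q \<union> U1 p Q)"
proof -
  have "bilinear p" using assms(1) unfolding nondegenerate_pairing_def by blast
  then have "\<And>U. U \<in> U0 p Q \<union> U1 p Q \<Longrightarrow> open U" by (rule U0_U1_open)
  then show ?thesis
    using topological_basis_iff U0_U1_local_base[OF assms] by blast
qed

end
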